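(* Let $A$ be a wqo and let $A_1,\dots,A_m$ be a quasi-incomparable family of subsets of $A$. Then $\mathbf{w}(A)\ge \mathbf{w}(A_m)+\mathbf{w}(A_{m-1})+\dots+\mathbf{w}(A_1)$, where $+$ is ordinary ordinal addition.
   Context: A wqo is a quasi-order with no infinite bad sequence (a sequence $x_0,x_1,\dots$ is bad if there are no $i<j$ with $x_i\le x_j$). $x\perp y$ means neither $x\le y$ nor $y\le x$. The width $\mathbf{w}(A)$ of a wqo $A$ is the rank of the forest $\mathrm{Inco}(A)$ of nonempty finite sequences of pairwise incomparable elements ordered by initial segment, i.e. $\mathbf{w}(A)=\sup_{s}(r(s)+1)$ where $r(s)=\sup\{r(t)+1: t \text{ child of } s\}$; subsets of $A$ carry the induced order. For subsets $S,T\subseteq A$, write $S\perp T$ if $s\perp t$ for all $s\in S,t\in T$. A sequence $A_1,\dots,A_m$ of subsets of $A$ is a quasi-incomparable family if for every $i\in[1,m]$ and every finite $Y\subseteq A_1\cup\dots\cup A_{i-1}$ there exists $A_i'\subseteq A_i$ such that $A_i'$ (with the induced order) is order-isomorphic to $A_i$ and $A_i'\perp Y$. (This notion depends on the numbering of the $A_i$.) *)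

theory Defs
  imports Main
begin

text \<open>Quasi-orders are given by a type of class preorder; a wqo is a subset A of
such a type (with the induced order) having no infinite bad sequence.
Ordinals are represented, as in Isabelle's BNF cardinal library, by
well-order relations, compared with the library relation \<open>ordLeq\<close> (existence of an order embedding).\<close>

definition incomp :: "'a::preorder \<Rightarrow> 'a \<Rightarrow> bool" where
  "incomp x y \<longleftrightarrow> \<not> x \<le> y \<and> \<not> y \<le> x"

definition wqo_on :: "'a::preorder set \<Rightarrow> bool" where
  "wqo_on A \<longleftrightarrow> (\<forall>f::nat \<Rightarrow> 'a. (\<forall>i. f i \<in> A) \<longrightarrow> (\<exists>i j. i < j \<and> f i \<le> f j))"

definition Inco :: "'a::preorder set \<Rightarrow> 'a list set" where
  "Inco A = {s. s \<noteq> [] \<and> set s \<subseteq> A \<and>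
      (\<forall>i<length s. \<forall>j<length s. i \<noteq> j \<longrightarrow> incomp (s ! i) (s ! j))}"

definition inco_child :: "'a::preorder set \<Rightarrow> 'a list \<Rightarrow> 'a list \<Rightarrow> bool" where
  "inco_child A t s \<longleftrightarrow> s \<in> Inco A \<and> t \<in> Inco A \<and> (\<exists>x. t = s @ [x])"

text \<open>Comparison of ranks: \<open>rank_le A s t\<close> means r(s) \<le> r(t), where
r(s) = sup{r(t)+1 : t child of s}.  Since r(s) \<le> r(t) iff every child s' of s
has r(s') < r(t) iff for every child s' of s there is a child t' of t with
r(s') \<le> r(t'), this is the least relation closed under the rule below
(the forest being well-founded when A is a wqo).\<close>
inductive rank_le :: "'a::preorder set \<Rightarrow> 'a list \<Rightarrow> 'a list \<Rightarrow> bool" for A where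
  "s \<in> Inco A \<Longrightarrow> t \<in> Inco A \<Longrightarrow>
   (\<And>s'. inco_child A s' s \<Longrightarrow> \<exists>t'. inco_child A t' t \<and> rank_le A s' t') \<Longrightarrow>
   rank_le A s t"

definition rank_classes :: "'a::preorder set \<Rightarrow> 'a list set set" where
  "rank_classes A = {{t \<in> Inco A. rank_le A s t \<and> rank_le A t s} | s. s \<in> Inco A}"

text \<open>The width w(A) = sup_s (r(s)+1), i.e. the order type of the set of ranks
(which is an initial segment of the ordinals), as a well-order on rank classes.\<close>
definition width :: "'a::preorder set \<Rightarrow> 'a list set rel" where
  "width A = {(C, D). C \<in> rank_classes A \<and> D \<in> rank_classes A \<and>
                 (\<exists>s\<in>C. \<exists>t\<in>D. rank_le A s t)}"

text \<open>Ordinal sum W m + W (m-1) + ... + W 1 of well-orders (index m first).\<close>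
definition osum_desc :: "nat \<Rightarrow> (nat \<Rightarrow> 'b rel) \<Rightarrow> (nat \<times> 'b) rel" where
  "osum_desc m W = {((i, x), (j, y)). i \<in> {1..m} \<and> j \<in> {1..m} \<and>
       x \<in> Field (W i) \<and> y \<in> Field (W j) \<and> (j < i \<or> (i = j \<and> (x, y) \<in> W i))}"

definition order_isomorphic :: "'a::preorder set \<Rightarrow> 'a set \<Rightarrow> bool" where
  "order_isomorphic S T \<longleftrightarrow>
     (\<exists>f. bij_betw f S T \<and> (\<forall>x\<in>S. \<forall>y\<in>S. x \<le> y \<longleftrightarrow> f x \<le> f y))"

definition set_incomp :: "'a::preorder set \<Rightarrow> 'a set \<Rightarrow> bool" where
  "set_incomp S T \<longleftrightarrow> (\<forall>s\<in>S. \<forall>t\<in>T. incomp s t)"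

definition quasi_incomparable_family :: "'a::preorder set \<Rightarrow> nat \<Rightarrow> (nat \<Rightarrow> 'a set) \<Rightarrow> bool" where
  "quasi_incomparable_family A m Af \<longleftrightarrow>
     (\<forall>i\<in>{1..m}. Af i \<subseteq> A) \<and>
     (\<forall>i\<in>{1..m}. \<forall>Y. finite Y \<and> Y \<subseteq> (\<Union>k\<in>{1..<i}. Af k) \<longrightarrow>
        (\<exists>A'. A' \<subseteq> Af i \<and> order_isomorphic (Af i) A' \<and> set_incomp A' Y))"

end

theory Submission
  imports Defs
begin

text \<open>
  When B is a wqo, the forest Inco(B) is well-founded, and comparing ranks
  (\<open>rank_le\<close>) is a total preorder with well-founded strict part, so the rank
  classes ordered by rank form a well-order of type w(B).

  To embed w(A_m) + ... + w(A_1) into w(A), a pair (k, C) of an index and a rank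
  class of Inco(A_k) is represented by a node t = p @ map \<phi> u of Inco(A), where
  p has entries in A_1, ..., A_(k-1), the node u of Inco(A_k) has rank at least C,
  and \<phi> maps A_k into itself preserving incomparability and making it incomparable
  with p.  Every pair below (k, C) in the sum is represented by a proper extension
  of t, whose rank in Inco(A) is strictly smaller: for the same index, u is extended
  by a child of the required rank; for a larger index j, quasi-incomparability
  provides a copy of A_j incomparable with the finitely many entries of t, on which
  a node of the required class is placed.  Sending each pair to the least rank class
  of a representing node is then strictly monotone.
\<close>

section \<open>Well-orders\<close>

lemma Well_orderI:
  assumes "r \<subseteq> A \<times> A" and "\<And>x. x \<in> A \<Longrightarrow> (x, x) \<in> r" and "trans r" and "antisym r"
    and "\<And>x y. x \<in> A \<Longrightarrow> y \<in> A \<Longrightarrow> (x, y) \<in> r \<or> (y, x) \<in> r"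
    and "\<And>X. X \<subseteq> A \<Longrightarrow> X \<noteq> {} \<Longrightarrow> \<exists>a\<in>X. \<forall>b\<in>X. (a, b) \<in> r"
  shows "Well_order r" and "Field r = A"
proof -
  show Field: "Field r = A"
    using assms(1,2) unfolding Field_def by blast
  have "Linear_order r"
    using assms(1-5) unfolding order_on_defs Field refl_on_def total_on_def by blast
  then show "Well_order r"
    using assms(6) Linear_order_Well_order_iff Field by blast
qed

lemma preorder_class_iff:
  fixes S :: "'a set" and R :: "'a \<Rightarrow> 'a \<Rightarrow> bool"
  defines "cl x \<equiv> {y \<in> S. R x y \<and> R y x}"
  assumes R_refl: "\<And>x. x \<in> S \<Longrightarrow> R x x" and R_trans: "\<And>x y z. R x y \<Longrightarrow> R y z \<Longrightarrow> R x z"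
    and "x \<in> S" and "y \<in> S"
  shows "cl x = cl y \<longleftrightarrow> R x y \<and> R y x"
    and "(cl x, cl y) \<in> {(cl x, cl y) | x y. x \<in> S \<and> y \<in> S \<and> R x y} \<longleftrightarrow> R x y"
proof -
  have cl_eq: "cl x = cl y \<longleftrightarrow> R x y \<and> R y x" if "x \<in> S" "y \<in> S" for x y
  proof
    assume "cl x = cl y"
    then have "x \<in> cl y"
      using that R_refl unfolding cl_def by auto
    then show "R x y \<and> R y x"
      unfolding cl_def by blast
  next
    assume "R x y \<and> R y x"
    then show "cl x = cl y"
      unfolding cl_def by (blast intro: R_trans)
  qed
  then show "cl x = cl y \<longleftrightarrow> R x y \<and> R y x"
    using assms(4,5) .
  show "(cl x, cl y) \<in> {(cl x, cl y) | x y. x \<in> S \<and> y \<in> S \<and> R x y} \<longleftrightarrow> R x y"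
  proof
    assume "(cl x, cl y) \<in> {(cl x, cl y) | x y. x \<in> S \<and> y \<in> S \<and> R x y}"
    then obtain x' y' where "x' \<in> S" "y' \<in> S" "R x' y'" "cl x = cl x'" "cl y = cl y'"
      by blast
    then show "R x y"
      using assms(4,5) cl_eq by (blast intro: R_trans)
  qed (use assms(4,5) in blast)
qed

lemma Well_order_preorder_quotient:
  fixes S :: "'a set" and R :: "'a \<Rightarrow> 'a \<Rightarrow> bool"
  defines "cl x \<equiv> {y \<in> S. R x y \<and> R y x}"
  assumes R_refl: "\<And>x. x \<in> S \<Longrightarrow> R x x"
    and R_trans: "\<And>x y z. R x y \<Longrightarrow> R y z \<Longrightarrow> R x z"
    and R_total: "\<And>x y. x \<in> S \<Longrightarrow> y \<in> S \<Longrightarrow> R x y \<or> R y x"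
    and wf: "wf {(x, y). x \<in> S \<and> y \<in> S \<and> R x y \<and> \<not> R y x}"
  shows "Well_order {(cl x, cl y) | x y. x \<in> S \<and> y \<in> S \<and> R x y}" (is "Well_order ?Q")
proof (rule Well_orderI[where A = "cl ` S"])
  have cl_eq: "cl x = cl y \<longleftrightarrow> R x y \<and> R y x" if "x \<in> S" "y \<in> S" for x y
    unfolding cl_def by (rule preorder_class_iff(1)[OF R_refl R_trans that])
  have Q_iff: "(cl x, cl y) \<in> ?Q \<longleftrightarrow> R x y" if "x \<in> S" "y \<in> S" for x y
    unfolding cl_def by (rule preorder_class_iff(2)[OF R_refl R_trans that])
  show "?Q \<subseteq> cl ` S \<times> cl ` S"
    by blast
  show "trans ?Q"
  proof (rule transI)
    fix C D E assume CD: "(C, D) \<in> ?Q" and DE: "(D, E) \<in> ?Q"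
    then obtain x y z where xyz: "x \<in> S" "y \<in> S" "z \<in> S" "C = cl x" "D = cl y" "E = cl z"
      by blast
    then have "R x y" "R y z"
      using CD DE Q_iff by simp_all
    with xyz show "(C, E) \<in> ?Q"
      using R_trans by blast
  qed
  show "antisym ?Q"
  proof (rule antisymI)
    fix C D assume CD: "(C, D) \<in> ?Q" and DC: "(D, C) \<in> ?Q"
    then obtain x y where xy: "x \<in> S" "y \<in> S" "C = cl x" "D = cl y"
      by blast
    then have "R x y" "R y x"
      using CD DC Q_iff by simp_all
    with xy show "C = D"
      using cl_eq by blast
  qed
  show "(C, C) \<in> ?Q" if "C \<in> cl ` S" for C
    using that R_refl by blast
  show "(C, D) \<in> ?Q \<or> (D, C) \<in> ?Q" if "C \<in> cl ` S" "D \<in> cl ` S" for C D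
    using that R_total by blast
  fix \<C> assume \<C>: "\<C> \<subseteq> cl ` S" "\<C> \<noteq> {}"
  then obtain x0 where "x0 \<in> {x \<in> S. cl x \<in> \<C>}"
    by blast
  then obtain x where x: "x \<in> {x \<in> S. cl x \<in> \<C>}"
    and min: "\<And>y. (y, x) \<in> {(x, y). x \<in> S \<and> y \<in> S \<and> R x y \<and> \<not> R y x} \<Longrightarrow> y \<notin> {x \<in> S. cl x \<in> \<C>}"
    by (erule wfE_min[OF wf])
  have "(cl x, cl y) \<in> ?Q" if "y \<in> S" "cl y \<in> \<C>" for y
    using that x min[of y] R_total[of x y] Q_iff by blast
  with x \<C>(1) show "\<exists>C\<in>\<C>. \<forall>D\<in>\<C>. (C, D) \<in> ?Q"
    by blast
qed

lemma Field_osum_desc: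
  assumes "\<And>i. i \<in> {1..m} \<Longrightarrow> Well_order (W i)"
  shows "Field (osum_desc m W) = {(i, x). i \<in> {1..m} \<and> x \<in> Field (W i)}"
  using assms wo_rel.REFL[unfolded wo_rel_def]
  unfolding osum_desc_def Field_def refl_on_def by fast

lemma osum_desc_least:
  assumes W: "\<And>i. i \<in> {1..m} \<Longrightarrow> Well_order (W i)"
    and X: "X \<subseteq> {(i, x). i \<in> {1..m} \<and> x \<in> Field (W i)}" "X \<noteq> {}"
  shows "\<exists>p\<in>X. \<forall>q\<in>X. (p, q) \<in> osum_desc m W"
proof -
  have fin: "finite (fst ` X)"
  proof (rule finite_subset)
    show "fst ` X \<subseteq> {1..m}"
      using X(1) by auto
  qed simp
  define i where "i = Max (fst ` X)"
  have i: "i \<in> fst ` X" "\<And>j. j \<in> fst ` X \<Longrightarrow> j \<le> i"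
    using fin X(2) unfolding i_def by auto
  define Y where "Y = {x. (i, x) \<in> X}"
  have i_range: "i \<in> {1..m}" and Y: "Y \<subseteq> Field (W i)" "Y \<noteq> {}"
    using i(1) X(1) unfolding Y_def by force+
  define x where "x = wo_rel.minim (W i) Y"
  have x: "x \<in> Y" "\<And>y. y \<in> Y \<Longrightarrow> (x, y) \<in> W i"
    using wo_rel.minim_in[of "W i" Y] wo_rel.minim_least[of "W i" Y] W[OF i_range] Y
    unfolding x_def wo_rel_def by blast+
  have "((i, x), (j, y)) \<in> osum_desc m W" if "(j, y) \<in> X" for j y
  proof -
    have "j \<le> i" "j \<in> {1..m}" "y \<in> Field (W j)"
      using that i(2)[of j] X(1) by force+
    moreover have "j = i \<Longrightarrow> (x, y) \<in> W i"
      using that x(2) unfolding Y_def by blast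
    ultimately show ?thesis
      using i_range x(1) Y(1) unfolding osum_desc_def by auto
  qed
  with x(1) show ?thesis
    unfolding Y_def by fast
qed

lemma Well_order_osum_desc:
  assumes W: "\<And>i. i \<in> {1..m} \<Longrightarrow> Well_order (W i)"
  shows "Well_order (osum_desc m W)" (is "Well_order ?r")
proof (rule Well_orderI[where A = "{(i, x). i \<in> {1..m} \<and> x \<in> Field (W i)}"])
  let ?F = "{(i, x). i \<in> {1..m} \<and> x \<in> Field (W i)}"
  have refl: "(x, x) \<in> W i" if "i \<in> {1..m}" "x \<in> Field (W i)" for i x
    using that W wo_rel.REFL unfolding wo_rel_def refl_on_def by blast
  have trans: "(x, z) \<in> W i" if "i \<in> {1..m}" "(x, y) \<in> W i" "(y, z) \<in> W i" for i x y z
    using that W wo_rel.TRANS unfolding wo_rel_def trans_def by blast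
  have antisym: "x = y" if "i \<in> {1..m}" "(x, y) \<in> W i" "(y, x) \<in> W i" for i x y
    using that W wo_rel.ANTISYM unfolding wo_rel_def antisym_def by blast
  have total: "(x, y) \<in> W i \<or> (y, x) \<in> W i" if "i \<in> {1..m}" "x \<in> Field (W i)" "y \<in> Field (W i)" for i x y
    using that W wo_rel.TOTALS unfolding wo_rel_def by blast
  show "?r \<subseteq> ?F \<times> ?F"
    unfolding osum_desc_def by blast
  show "(p, p) \<in> ?r" if "p \<in> ?F" for p
    using that refl unfolding osum_desc_def by blast
  show "trans ?r"
    using trans unfolding osum_desc_def trans_def by auto
  show "antisym ?r"
    using antisym unfolding osum_desc_def antisym_def by auto
  show "(p, q) \<in> ?r \<or> (q, p) \<in> ?r"
    if "p \<in> ?F" "q \<in> ?F" for p q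
    using that total unfolding osum_desc_def by (auto simp: linorder_neq_iff) blast
qed (rule osum_desc_least[OF W])

lemma Well_order_strict_mono_self_ge:
  assumes r: "Well_order r"
    and h_Field: "\<And>x. x \<in> Field r \<Longrightarrow> h x \<in> Field r"
    and h_mono: "\<And>x y. (x, y) \<in> r \<Longrightarrow> x \<noteq> y \<Longrightarrow> (h x, h y) \<in> r \<and> h x \<noteq> h y"
    and "x \<in> Field r"
  shows "(x, h x) \<in> r"
  using assms(4)
proof (induction x rule: wf_induct_rule[OF wo_rel.WF[unfolded wo_rel_def, OF r]])
  case (1 x)
  show ?case
  proof (rule ccontr)
    assume "(x, h x) \<notin> r"
    moreover have "(x, h x) \<in> r \<or> (h x, x) \<in> r"
      using wo_rel.TOTALS[unfolded wo_rel_def, OF r] h_Field 1(2) by blast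
    ultimately have less: "(h x, x) \<in> r - Id"
      using wo_rel.REFL[unfolded wo_rel_def, OF r] 1(2) unfolding refl_on_def by auto
    then have "(h (h x), h x) \<in> r" "h (h x) \<noteq> h x"
      using h_mono by blast+
    moreover have "(h x, h (h x)) \<in> r"
      using 1(1)[OF less] h_Field 1(2) by blast
    ultimately show False
      using wo_rel.ANTISYM[unfolded wo_rel_def, OF r] unfolding antisym_def by blast
  qed
qed

lemma strict_mono_ordLeq:
  assumes r: "Well_order r" and r': "Well_order r'"
    and g_Field: "\<And>x. x \<in> Field r \<Longrightarrow> g x \<in> Field r'"
    and g_mono: "\<And>x y. (x, y) \<in> r \<Longrightarrow> x \<noteq> y \<Longrightarrow> (g x, g y) \<in> r' \<and> g x \<noteq> g y"
  shows "(r, r') \<in> ordLeq"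
proof (rule ccontr)
  assume "(r, r') \<notin> ordLeq"
  then obtain f where f: "embed r' r f" "\<not> bij_betw f (Field r') (Field r)"
    using not_ordLeq_iff_ordLess[OF r' r] unfolding ordLess_def embedS_def by blast
  have f_inj: "inj_on f (Field r')"
    by (rule embed_inj_on[OF r' f(1)])
  have f_Field: "f ` Field r' \<subseteq> Field r"
    by (rule embed_Field[OF f(1)])
  have f_mono: "(x, y) \<in> r' \<Longrightarrow> (f x, f y) \<in> r" for x y
    using embed_compat[OF f(1)] unfolding compat_def by blast
  have "f ` Field r' \<noteq> Field r"
    using f(2) f_inj unfolding bij_betw_def by blast
  moreover have "ofilter r (f ` Field r')"
    by (rule embed_Field_ofilter[OF r' r f(1)])
  ultimately obtain a where a: "a \<in> Field r" "underS r a = f ` Field r'"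
    using wo_rel.ofilter_underS_Field[OF r[folded wo_rel_def]] by metis
  have "(a, f (g a)) \<in> r"
  proof (rule Well_order_strict_mono_self_ge[OF r, of "\<lambda>x. f (g x)"])
    show "f (g x) \<in> Field r" if "x \<in> Field r" for x
      using that g_Field f_Field by blast
    show "(f (g x), f (g y)) \<in> r \<and> f (g x) \<noteq> f (g y)" if "(x, y) \<in> r" "x \<noteq> y" for x y
    proof -
      have "(g x, g y) \<in> r'" "g x \<noteq> g y" "g x \<in> Field r'" "g y \<in> Field r'"
        using that g_mono g_Field FieldI1 FieldI2 by metis+
      then show ?thesis
        using f_mono f_inj unfolding inj_on_def by blast
    qed
  qed (rule a(1))
  moreover have "f (g a) \<in> underS r a"
    using a g_Field by blast
  ultimately show False
    using wo_rel.ANTISYM[unfolded wo_rel_def, OF r] unfolding underS_def antisym_def by blast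
qed

lemma simulation_ordLeq:
  assumes r: "Well_order r" and r': "Well_order r'"
    and start: "\<And>a. a \<in> Field r \<Longrightarrow> \<exists>b\<in>Field r'. R a b"
    and step: "\<And>a b a'. R a b \<Longrightarrow> (a', a) \<in> r \<Longrightarrow> a' \<noteq> a \<Longrightarrow>
         \<exists>b'\<in>Field r'. (b', b) \<in> r' \<and> b' \<noteq> b \<and> R a' b'"
  shows "(r, r') \<in> ordLeq"
proof -
  define g where "g a = wo_rel.minim r' {b \<in> Field r'. R a b}" for a
  have g: "g a \<in> Field r'" "R a (g a)" "\<And>b. b \<in> Field r' \<Longrightarrow> R a b \<Longrightarrow> (g a, b) \<in> r'"
    if "a \<in> Field r" for a
  proof -
    have "{b \<in> Field r'. R a b} \<noteq> {}"
      using start[OF that] by blast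
    then show "g a \<in> Field r'" "R a (g a)" "\<And>b. b \<in> Field r' \<Longrightarrow> R a b \<Longrightarrow> (g a, b) \<in> r'"
      using wo_rel.minim_in[OF r'[folded wo_rel_def], of "{b \<in> Field r'. R a b}"]
        wo_rel.minim_least[OF r'[folded wo_rel_def], of "{b \<in> Field r'. R a b}"]
      unfolding g_def by auto
  qed
  show ?thesis
  proof (rule strict_mono_ordLeq[OF r r', of g])
    show "g x \<in> Field r'" if "x \<in> Field r" for x
      using g(1) that .
    fix x y assume xy: "(x, y) \<in> r" "x \<noteq> y"
    then have "x \<in> Field r" "y \<in> Field r"
      by (auto intro: FieldI1 FieldI2)
    then obtain b' where b': "b' \<in> Field r'" "(b', g y) \<in> r'" "b' \<noteq> g y" "R x b'"
      using step[of y "g y" x] g xy by blast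
    then have "(g x, b') \<in> r'"
      using g(3) \<open>x \<in> Field r\<close> by blast
    with b'(2,3) show "(g x, g y) \<in> r' \<and> g x \<noteq> g y"
      using wo_rel.TRANS[OF r'[folded wo_rel_def]] wo_rel.ANTISYM[OF r'[folded wo_rel_def]]
      unfolding trans_def antisym_def by metis
  qed
qed

section \<open>Sequences of pairwise incomparable elements\<close>

lemma incomp_sym: "incomp x y \<Longrightarrow> incomp y x"
  unfolding incomp_def by auto

lemma incomp_irrefl: "\<not> incomp x x"
  unfolding incomp_def by auto

lemma Inco_iff:
  "s \<in> Inco B \<longleftrightarrow>
     s \<noteq> [] \<and> set s \<subseteq> B \<and> distinct s \<and> (\<forall>x\<in>set s. \<forall>y\<in>set s. x \<noteq> y \<longrightarrow> incomp x y)"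
proof -
  have "(\<forall>i<length s. \<forall>j<length s. i \<noteq> j \<longrightarrow> incomp (s ! i) (s ! j)) \<longleftrightarrow>
        distinct s \<and> (\<forall>x\<in>set s. \<forall>y\<in>set s. x \<noteq> y \<longrightarrow> incomp x y)"
    (is "?nth \<longleftrightarrow> _")
  proof
    assume ?nth
    then show "distinct s \<and> (\<forall>x\<in>set s. \<forall>y\<in>set s. x \<noteq> y \<longrightarrow> incomp x y)"
      unfolding distinct_conv_nth by (metis in_set_conv_nth incomp_irrefl)
  qed (auto simp: distinct_conv_nth)
  then show ?thesis
    unfolding Inco_def by blast
qed

lemma Inco_append_iff:
  assumes "t \<noteq> []" "v \<noteq> []"
  shows "t @ v \<in> Inco B \<longleftrightarrow> t \<in> Inco B \<and> v \<in> Inco B \<and> (\<forall>x\<in>set t. \<forall>y\<in>set v. incomp x y)"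
proof
  assume tv: "t @ v \<in> Inco B"
  then have "set t \<inter> set v = {}"
    by (simp add: Inco_iff)
  with tv show "t \<in> Inco B \<and> v \<in> Inco B \<and> (\<forall>x\<in>set t. \<forall>y\<in>set v. incomp x y)"
    using assms unfolding Inco_iff by (auto simp: disjoint_iff) (metis UnI1 UnI2)
next
  assume "t \<in> Inco B \<and> v \<in> Inco B \<and> (\<forall>x\<in>set t. \<forall>y\<in>set v. incomp x y)"
  moreover from this have "set t \<inter> set v = {}"
    using incomp_irrefl by blast
  ultimately show "t @ v \<in> Inco B"
    unfolding Inco_iff by (auto intro: incomp_sym)
qed

lemma Inco_map:
  assumes "u \<in> Inco B" "\<phi> ` B \<subseteq> B'"
    and "\<forall>x\<in>B. \<forall>y\<in>B. incomp x y \<longrightarrow> incomp (\<phi> x) (\<phi> y)"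
  shows "map \<phi> u \<in> Inco B'"
proof -
  have "inj_on \<phi> (set u)"
    using assms(1,3) incomp_irrefl unfolding Inco_iff inj_on_def by (metis subsetD)
  then show ?thesis
    using assms unfolding Inco_iff by (auto simp: distinct_map subset_iff image_subset_iff) metis
qed

lemma inco_child_iff:
  "inco_child B t s \<longleftrightarrow>
     s \<in> Inco B \<and> (\<exists>x. t = s @ [x] \<and> x \<in> B \<and> (\<forall>y\<in>set s. incomp y x))"
proof -
  have "s @ [x] \<in> Inco B \<longleftrightarrow> s \<in> Inco B \<and> x \<in> B \<and> (\<forall>y\<in>set s. incomp y x)"
    if "s \<in> Inco B" for x
    using that Inco_append_iff[of s "[x]" B] by (auto simp: Inco_def)
  then show ?thesis
    unfolding inco_child_def by blast
qed

lemma wf_inco_child: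
  assumes "wqo_on B"
  shows "wf {(t, s). inco_child B t s}"
proof (rule ccontr)
  assume "\<not> ?thesis"
  then obtain f where "\<And>i. inco_child B (f (Suc i)) (f i)"
    unfolding wf_iff_no_infinite_down_chain by auto
  then have "\<forall>i. \<exists>x. f (Suc i) = f i @ [x] \<and> x \<in> B \<and> (\<forall>y\<in>set (f i). incomp y x)"
    by (simp add: inco_child_iff)
  then obtain g where "\<forall>i. f (Suc i) = f i @ [g i] \<and> g i \<in> B \<and> (\<forall>y\<in>set (f i). incomp y (g i))"
    by (rule choice[THEN exE])
  then have g: "\<And>i. f (Suc i) = f i @ [g i]" "\<And>i. g i \<in> B"
    and g_incomp: "\<And>i y. y \<in> set (f i) \<Longrightarrow> incomp y (g i)"
    by blast+
  have f_eq: "f i = f 0 @ map g [0..<i]" for i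
    by (induction i) (simp_all add: g(1))
  have "incomp (g i) (g j)" if "i < j" for i j
    using that g_incomp[of "g i" j] f_eq[of j] by auto
  moreover obtain i j where "i < j" "g i \<le> g j"
    using assms g(2) unfolding wqo_on_def by blast
  ultimately show False
    unfolding incomp_def by blast
qed

lemma inco_child_induct:
  assumes "wqo_on B" and "\<And>s. (\<And>t. inco_child B t s \<Longrightarrow> P t) \<Longrightarrow> P s"
  shows "P s"
  using wf_induct[OF wf_inco_child[OF assms(1)], of P] assms(2) by blast

section \<open>Ranks in the forest of incomparable sequences\<close>

lemma rank_le_Inco: "rank_le B s t \<Longrightarrow> s \<in> Inco B \<and> t \<in> Inco B"
  by (blast elim: rank_le.cases)

lemma rank_leD: "rank_le B s t \<Longrightarrow> inco_child B s' s \<Longrightarrow> \<exists>t'. inco_child B t' t \<and> rank_le B s' t'"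
  by (blast elim: rank_le.cases)

lemma rank_le_refl:
  assumes "wqo_on B" and "s \<in> Inco B"
  shows "rank_le B s s"
  using assms(2)
proof (induction s rule: inco_child_induct[OF assms(1), case_names step])
  case (step s)
  show ?case
  proof (rule rank_le.intros[OF step.prems step.prems])
    fix s' assume "inco_child B s' s"
    with step.IH show "\<exists>t'. inco_child B t' s \<and> rank_le B s' t'"
      unfolding inco_child_def by blast
  qed
qed

lemma rank_le_trans: "rank_le B s t \<Longrightarrow> rank_le B t u \<Longrightarrow> rank_le B s u"
proof (induction s t arbitrary: u rule: rank_le.induct)
  case (1 s t)
  show ?case
  proof (rule rank_le.intros)
    show "s \<in> Inco B" "u \<in> Inco B"
      using 1 rank_le_Inco by blast+
    fix s' assume "inco_child B s' s"
    then obtain t' where "inco_child B t' t" "\<And>u. rank_le B t' u \<Longrightarrow> rank_le B s' u"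
      using 1(3) by blast
    then show "\<exists>u'. inco_child B u' u \<and> rank_le B s' u'"
      using rank_leD[OF 1(4)] by blast
  qed
qed

lemma rank_le_total:
  assumes "wqo_on B" and "s \<in> Inco B" and "t \<in> Inco B"
  shows "rank_le B s t \<or> rank_le B t s"
  using assms(2,3)
proof (induction s arbitrary: t rule: inco_child_induct[OF assms(1), case_names step])
  case (step s)
  show ?case
  proof (rule disjCI)
    assume not_ts: "\<not> rank_le B t s"
    show "rank_le B s t"
    proof (rule rank_le.intros[OF step.prems])
      fix s' assume s': "inco_child B s' s"
      show "\<exists>t'. inco_child B t' t \<and> rank_le B s' t'"
      proof (rule ccontr)
        assume "\<not> ?thesis"
        then have "\<exists>s'. inco_child B s' s \<and> rank_le B t' s'" if "inco_child B t' t" for t'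
          using step.IH[OF s', of t'] s' that unfolding inco_child_def by blast
        then have "rank_le B t s"
          by (rule rank_le.intros[OF step.prems(2,1)])
        with not_ts show False ..
      qed
    qed
  qed
qed

lemma not_rank_le_child:
  assumes "wqo_on B" and "inco_child B t' t"
  shows "\<not> rank_le B t t'"
  using assms(2)
proof (induction t arbitrary: t' rule: inco_child_induct[OF assms(1), case_names step])
  case (step t)
  show ?case
  proof
    assume "rank_le B t t'"
    then obtain t'' where "inco_child B t'' t'" "rank_le B t' t''"
      using rank_leD step.prems by blast
    with step.IH[OF step.prems] show False by blast
  qed
qed

lemma not_rank_le_iff:
  assumes "wqo_on B" and "s \<in> Inco B" and "t \<in> Inco B"
  shows "\<not> rank_le B t s \<longleftrightarrow> (\<exists>t'. inco_child B t' t \<and> rank_le B s t')"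
proof
  show "\<not> rank_le B t s \<Longrightarrow> \<exists>t'. inco_child B t' t \<and> rank_le B s t'"
    using assms(2,3)
  proof (induction s arbitrary: t rule: inco_child_induct[OF assms(1), case_names step])
    case (step s)
    then obtain t' where t': "inco_child B t' t" "\<And>s'. inco_child B s' s \<Longrightarrow> \<not> rank_le B t' s'"
      using rank_le.intros[OF step.prems(3,2)] by blast
    have "rank_le B s t'"
    proof (rule rank_le.intros[OF step.prems(2)])
      show "t' \<in> Inco B"
        using t'(1) unfolding inco_child_def by blast
      fix s' assume "inco_child B s' s"
      then show "\<exists>t''. inco_child B t'' t' \<and> rank_le B s' t''"
        using step.IH t' unfolding inco_child_def by blast
    qed
    with t'(1) show ?case by blast
  qed
next
  assume "\<exists>t'. inco_child B t' t \<and> rank_le B s t'"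
  then show "\<not> rank_le B t s"
    using not_rank_le_child[OF assms(1)] rank_le_trans by blast
qed

lemma rank_le_subset:
  assumes "wqo_on B" and "s \<in> Inco B" and "t \<in> Inco B" and "set t \<subseteq> set s"
  shows "rank_le B s t"
  using assms(2-)
proof (induction s arbitrary: t rule: inco_child_induct[OF assms(1), case_names step])
  case (step s)
  show ?case
  proof (rule rank_le.intros[OF step.prems(1,2)])
    fix s' assume "inco_child B s' s"
    then obtain y where y: "s' = s @ [y]" "y \<in> B" "\<forall>z\<in>set s. incomp z y"
      by (auto simp: inco_child_iff)
    then have "inco_child B (t @ [y]) t"
      using step.prems(2,3) by (auto simp: inco_child_iff)
    moreover have "rank_le B s' (t @ [y])"
      using step.IH[OF \<open>inco_child B s' s\<close>] \<open>inco_child B s' s\<close> calculation step.prems(3) y(1)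
      unfolding inco_child_def by force
    ultimately show "\<exists>t'. inco_child B t' t \<and> rank_le B s' t'" by blast
  qed
qed

lemma not_rank_le_psubset:
  assumes "wqo_on B" and "s \<in> Inco B" and "t \<in> Inco B" and "set t \<subset> set s"
  shows "\<not> rank_le B t s"
proof
  obtain x where x: "x \<in> set s" "x \<notin> set t"
    using assms(4) by blast
  then have "inco_child B (t @ [x]) t"
    using assms(2-4) unfolding inco_child_iff Inco_iff by auto
  moreover have "rank_le B s (t @ [x])"
    using rank_le_subset[OF assms(1,2)] calculation assms(4) x(1)
    unfolding inco_child_def by auto
  moreover assume "rank_le B t s"
  ultimately show False
    using not_rank_le_child[OF assms(1)] rank_le_trans by blast
qed

lemma wf_rank_less:
  assumes "wqo_on B"
  shows "wf {(s, t). rank_le B s t \<and> \<not> rank_le B t s}" (is "wf ?less")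
proof -
  have "s \<in> Wellfounded.acc ?less" if "rank_le B s t" for s t
    using that rank_le_Inco[OF that]
  proof (induction t arbitrary: s rule: inco_child_induct[OF assms, case_names step])
    case (step t)
    show ?case
    proof (rule accI)
      fix u assume "(u, s) \<in> ?less"
      then obtain s' where "inco_child B s' s" "rank_le B u s'"
        using not_rank_le_iff[OF assms] rank_le_Inco by blast
      moreover obtain t' where "inco_child B t' t" "rank_le B s' t'"
        using rank_leD[OF step.prems(1)] calculation(1) by blast
      ultimately show "u \<in> Wellfounded.acc ?less"
        using step.IH rank_le_trans rank_le_Inco unfolding inco_child_def by blast
    qed
  qed
  then show ?thesis
    by (auto intro: acc_wfI accI)
qed

section \<open>The width as a well-order\<close>

definition rank_class :: "'a::preorder set \<Rightarrow> 'a list \<Rightarrow> 'a list set" where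
  "rank_class B s = {t \<in> Inco B. rank_le B s t \<and> rank_le B t s}"

lemma rank_classes_eq: "rank_classes B = rank_class B ` Inco B"
  unfolding rank_classes_def rank_class_def by blast

lemma rank_class_self: "wqo_on B \<Longrightarrow> s \<in> Inco B \<Longrightarrow> s \<in> rank_class B s"
  unfolding rank_class_def using rank_le_refl by blast

lemma rank_class_eq_iff:
  assumes "wqo_on B" and "s \<in> Inco B" and "t \<in> Inco B"
  shows "rank_class B s = rank_class B t \<longleftrightarrow> rank_le B s t \<and> rank_le B t s"
  using rank_class_self[OF assms(1)] assms(2,3) rank_le_trans
  unfolding rank_class_def by blast

lemma rank_class_of_mem:
  assumes "wqo_on B" and "C \<in> rank_classes B" and "c \<in> C"
  shows "c \<in> Inco B" and "C = rank_class B c"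
proof -
  obtain s where s: "s \<in> Inco B" "C = rank_class B s"
    using assms(2) unfolding rank_classes_eq by blast
  then show "c \<in> Inco B"
    using assms(3) unfolding rank_class_def by blast
  then show "C = rank_class B c"
    using s assms(3) rank_class_eq_iff[OF assms(1)] unfolding rank_class_def by blast
qed

lemma width_eq:
  assumes "wqo_on B"
  shows "width B = {(rank_class B s, rank_class B t) | s t. s \<in> Inco B \<and> t \<in> Inco B \<and> rank_le B s t}"
proof -
  have "rank_le B s t"
    if "s' \<in> rank_class B s" "t' \<in> rank_class B t" "rank_le B s' t'" for s t s' t'
    using that rank_le_trans unfolding rank_class_def by blast
  then show ?thesis
    unfolding width_def rank_classes_eq using rank_class_self[OF assms] by blast
qed

lemma width_iff:
  assumes "wqo_on B" and "s \<in> Inco B" and "t \<in> Inco B"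
  shows "(rank_class B s, rank_class B t) \<in> width B \<longleftrightarrow> rank_le B s t"
proof
  assume "(rank_class B s, rank_class B t) \<in> width B"
  then obtain s' t' where "s' \<in> Inco B" "t' \<in> Inco B" "rank_le B s' t'"
    "rank_class B s = rank_class B s'" "rank_class B t = rank_class B t'"
    unfolding width_eq[OF assms(1)] by blast
  then show "rank_le B s t"
    using assms rank_class_eq_iff[OF assms(1)] rank_le_trans by metis
qed (use assms in \<open>auto simp: width_eq\<close>)

lemma Field_width:
  assumes "wqo_on B"
  shows "Field (width B) = rank_classes B"
proof
  show "Field (width B) \<subseteq> rank_classes B"
    unfolding width_def Field_def by blast
  show "rank_classes B \<subseteq> Field (width B)"
    using width_iff[OF assms] rank_le_refl[OF assms] unfolding rank_classes_eq by (blast intro: FieldI1)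
qed

lemma Well_order_width:
  assumes "wqo_on B"
  shows "Well_order (width B)"
  unfolding width_eq[OF assms] rank_class_def
proof (rule Well_order_preorder_quotient)
  show "wf {(s, t). s \<in> Inco B \<and> t \<in> Inco B \<and> rank_le B s t \<and> \<not> rank_le B t s}"
    by (rule wf_subset[OF wf_rank_less[OF assms]]) blast
qed (use rank_le_refl[OF assms] rank_le_trans rank_le_total[OF assms] in blast)+

lemma width_append_less:
  assumes "wqo_on B" and "t \<in> Inco B" and "t @ w \<in> Inco B" and "w \<noteq> []"
  shows "(rank_class B (t @ w), rank_class B t) \<in> width B \<and> rank_class B (t @ w) \<noteq> rank_class B t"
proof -
  have "set t \<subset> set (t @ w)"
    using assms(3,4) unfolding Inco_iff by (cases w) auto
  then show ?thesis
    using rank_le_subset[OF assms(1,3,2)] not_rank_le_psubset[OF assms(1,3,2)]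
      width_iff[OF assms(1,3,2)] rank_class_eq_iff[OF assms(1,3,2)] by auto
qed

section \<open>Quasi-incomparable families\<close>

definition separating_map :: "'a::preorder set \<Rightarrow> 'a set \<Rightarrow> ('a \<Rightarrow> 'a) \<Rightarrow> bool" where
  "separating_map B Y \<phi> \<longleftrightarrow> \<phi> ` B \<subseteq> B \<and> (\<forall>x\<in>B. \<forall>y\<in>B. incomp x y \<longrightarrow> incomp (\<phi> x) (\<phi> y)) \<and>
     (\<forall>x\<in>B. \<forall>y\<in>Y. incomp (\<phi> x) y)"

lemma quasi_incomparable_family_subset:
  "quasi_incomparable_family A m Af \<Longrightarrow> k \<in> {1..m} \<Longrightarrow> Af k \<subseteq> A"
  unfolding quasi_incomparable_family_def by blast

lemma quasi_incomparable_family_wqo_on: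
  "wqo_on A \<Longrightarrow> quasi_incomparable_family A m Af \<Longrightarrow> k \<in> {1..m} \<Longrightarrow> wqo_on (Af k)"
  using quasi_incomparable_family_subset unfolding wqo_on_def by (meson subsetD)

lemma quasi_incomparable_family_separating_map:
  assumes "quasi_incomparable_family A m Af" and "k \<in> {1..m}"
    and "finite Y" and "Y \<subseteq> (\<Union>i\<in>{1..<k}. Af i)"
  obtains \<phi> where "separating_map (Af k) Y \<phi>"
proof -
  obtain A' f where "A' \<subseteq> Af k" "set_incomp A' Y" "bij_betw f (Af k) A'"
    "\<forall>x\<in>Af k. \<forall>y\<in>Af k. x \<le> y \<longleftrightarrow> f x \<le> f y"
    using assms unfolding quasi_incomparable_family_def order_isomorphic_def by meson
  then have "separating_map (Af k) Y f"
    unfolding separating_map_def set_incomp_def incomp_def bij_betw_def by blast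
  then show ?thesis ..
qed

lemma Inco_append_separating_map:
  assumes "t = [] \<or> t \<in> Inco A" and "u \<in> Inco B" and "B \<subseteq> A" and "separating_map B (set t) \<phi>"
  shows "t @ map \<phi> u \<in> Inco A"
proof -
  have "map \<phi> u \<in> Inco A"
    using assms(2-4) Inco_map[of u B \<phi> A] unfolding separating_map_def by blast
  moreover have "\<forall>x\<in>set t. \<forall>y\<in>set (map \<phi> u). incomp x y"
    using assms(2,4) unfolding separating_map_def Inco_iff by (auto intro: incomp_sym dest!: subsetD)
  ultimately show ?thesis
    using assms(1) Inco_append_iff[of t "map \<phi> u" A] by (auto simp: Inco_def)
qed

definition rank_witness :: "'a::preorder set \<Rightarrow> (nat \<Rightarrow> 'a set) \<Rightarrow> nat \<Rightarrow> 'a list set \<Rightarrow> 'a list \<Rightarrow> bool" where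
  "rank_witness A Af k C t \<longleftrightarrow> t \<in> Inco A \<and>
     (\<exists>p u \<phi>. t = p @ map \<phi> u \<and> set p \<subseteq> (\<Union>i\<in>{1..<k}. Af i) \<and> separating_map (Af k) (set p) \<phi> \<and>
        u \<in> Inco (Af k) \<and> (\<exists>c\<in>C. rank_le (Af k) c u))"

lemma rank_witness_Inco: "rank_witness A Af k C t \<Longrightarrow> t \<in> Inco A"
  unfolding rank_witness_def by blast

lemma rank_witness_set:
  assumes "rank_witness A Af k C t" and "1 \<le> k" and "k < j"
  shows "set t \<subseteq> (\<Union>i\<in>{1..<j}. Af i)"
proof -
  obtain p u \<phi> where "t = p @ map \<phi> u" "set p \<subseteq> (\<Union>i\<in>{1..<k}. Af i)"
    "separating_map (Af k) (set p) \<phi>" "u \<in> Inco (Af k)"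
    using assms(1) unfolding rank_witness_def by blast
  moreover have "set (map \<phi> u) \<subseteq> Af k"
    using calculation(3,4) unfolding separating_map_def Inco_def by force
  moreover have "{1..<k} \<subseteq> {1..<j}" "k \<in> {1..<j}"
    using assms(2,3) by auto
  ultimately show ?thesis
    by fastforce
qed

lemma rank_witness_exists:
  assumes "quasi_incomparable_family A m Af" and "j \<in> {1..m}" and "wqo_on (Af j)"
    and "C \<in> rank_classes (Af j)"
    and "t = [] \<or> t \<in> Inco A" and "set t \<subseteq> (\<Union>i\<in>{1..<j}. Af i)"
  shows "\<exists>w. w \<noteq> [] \<and> rank_witness A Af j C (t @ w)"
proof -
  obtain c where c: "c \<in> Inco (Af j)" "C = rank_class (Af j) c"
    using assms(4) unfolding rank_classes_eq by blast
  obtain \<psi> where \<psi>: "separating_map (Af j) (set t) \<psi>"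
    using quasi_incomparable_family_separating_map[OF assms(1,2) finite_set assms(6)] .
  have "t @ map \<psi> c \<in> Inco A"
    using Inco_append_separating_map[OF assms(5) c(1) _ \<psi>]
      quasi_incomparable_family_subset[OF assms(1,2)] .
  moreover have "c \<in> C" "rank_le (Af j) c c"
    using c rank_class_self[OF assms(3)] rank_le_refl[OF assms(3)] by blast+
  ultimately have "rank_witness A Af j C (t @ map \<psi> c)"
    unfolding rank_witness_def using assms(6) \<psi> c(1) by blast
  moreover have "map \<psi> c \<noteq> []"
    using c(1) unfolding Inco_def by simp
  ultimately show ?thesis
    by blast
qed

lemma rank_witness_extend:
  assumes "wqo_on (Af k)" and "Af k \<subseteq> A" and "rank_witness A Af k C t"
    and "C \<in> rank_classes (Af k)" and "C' \<in> rank_classes (Af k)"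
    and "(C', C) \<in> width (Af k)" and "C' \<noteq> C"
  shows "\<exists>x. rank_witness A Af k C' (t @ [x])"
proof -
  obtain p u \<phi> c where t: "t \<in> Inco A" "t = p @ map \<phi> u" "set p \<subseteq> (\<Union>i\<in>{1..<k}. Af i)"
    and \<phi>: "separating_map (Af k) (set p) \<phi>"
    and u: "u \<in> Inco (Af k)" "c \<in> C" "rank_le (Af k) c u"
    using assms(3) unfolding rank_witness_def by blast
  obtain c' where c': "c' \<in> Inco (Af k)" "C' = rank_class (Af k) c'"
    using assms(5) unfolding rank_classes_eq by blast
  have c: "c \<in> Inco (Af k)" "C = rank_class (Af k) c"
    using rank_class_of_mem[OF assms(1,4) u(2)] by blast+
  have "\<not> rank_le (Af k) c c'"
    using assms(6,7) c c' width_iff[OF assms(1)] rank_class_eq_iff[OF assms(1)] by metis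
  then obtain c'' where "inco_child (Af k) c'' c" "rank_le (Af k) c' c''"
    using not_rank_le_iff[OF assms(1) c'(1) c(1)] by blast
  then obtain u' where "inco_child (Af k) u' u" "rank_le (Af k) c' u'"
    using rank_leD[OF u(3)] rank_le_trans by blast
  moreover have "p = [] \<or> p \<in> Inco A"
    using t(1,2) u(1) Inco_append_iff[of p "map \<phi> u" A] unfolding Inco_def by auto
  ultimately have "p @ map \<phi> u' \<in> Inco A"
    using Inco_append_separating_map[OF _ _ assms(2) \<phi>] unfolding inco_child_def by blast
  moreover obtain x where "t @ [\<phi> x] = p @ map \<phi> u'"
    using \<open>inco_child (Af k) u' u\<close> t(2) unfolding inco_child_def by auto
  moreover have "c' \<in> C'" "u' \<in> Inco (Af k)"
    using c' rank_class_self[OF assms(1)] \<open>inco_child (Af k) u' u\<close>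
    unfolding inco_child_def by blast+
  ultimately have "rank_witness A Af k C' (t @ [\<phi> x])"
    unfolding rank_witness_def using t(3) \<phi> \<open>rank_le (Af k) c' u'\<close> by auto
  then show ?thesis ..
qed

lemma rank_witness_descend:
  assumes "wqo_on A" and "quasi_incomparable_family A m Af"
    and "rank_witness A Af k C t"
    and "((j, C'), (k, C)) \<in> osum_desc m (\<lambda>i. width (Af i))" and "(j, C') \<noteq> (k, C)"
  shows "\<exists>w. w \<noteq> [] \<and> rank_witness A Af j C' (t @ w)"
proof -
  have jk: "j \<in> {1..m}" "k \<in> {1..m}" and "C' \<in> Field (width (Af j))" "C \<in> Field (width (Af k))"
    and order: "k < j \<or> (j = k \<and> (C', C) \<in> width (Af k))"
    using assms(4) unfolding osum_desc_def by auto
  have wqo: "wqo_on (Af i)" if "i \<in> {1..m}" for i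
    using quasi_incomparable_family_wqo_on[OF assms(1,2) that] .
  have C': "C' \<in> rank_classes (Af j)" and C: "C \<in> rank_classes (Af k)"
    using Field_width wqo jk \<open>C' \<in> _\<close> \<open>C \<in> _\<close> by blast+
  show ?thesis
  proof (cases "k < j")
    case True
    then show ?thesis
      using rank_witness_exists[OF assms(2) jk(1) wqo[OF jk(1)] C'] rank_witness_Inco[OF assms(3)]
        rank_witness_set[OF assms(3)] jk(2) by auto
  next
    case False
    then show ?thesis
      using rank_witness_extend[OF wqo[OF jk(2)] quasi_incomparable_family_subset[OF assms(2) jk(2)] assms(3) C]
        order C' assms(5) by blast
  qed
qed

definition represents :: "'a::preorder set \<Rightarrow> (nat \<Rightarrow> 'a set) \<Rightarrow> nat \<times> 'a list set \<Rightarrow> 'a list set \<Rightarrow> bool" where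
  "represents A Af a D \<longleftrightarrow> (\<exists>t. D = rank_class A t \<and> rank_witness A Af (fst a) (snd a) t)"

lemma represents_start:
  assumes "wqo_on A" and "quasi_incomparable_family A m Af"
    and "a \<in> Field (osum_desc m (\<lambda>i. width (Af i)))"
  shows "\<exists>D\<in>Field (width A). represents A Af a D"
proof -
  have wqo: "wqo_on (Af i)" if "i \<in> {1..m}" for i
    using quasi_incomparable_family_wqo_on[OF assms(1,2) that] .
  obtain k C where a: "a = (k, C)" "k \<in> {1..m}" "C \<in> rank_classes (Af k)"
    using assms(3) Field_osum_desc[OF Well_order_width[OF wqo]] Field_width[OF wqo] by auto
  then obtain w where "rank_witness A Af k C w"
    using rank_witness_exists[OF assms(2) a(2) wqo[OF a(2)] a(3), of "[]"] by auto
  then show ?thesis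
    using a(1) rank_witness_Inco[of A Af k C w] Field_width[OF assms(1)]
    unfolding represents_def rank_classes_eq by auto
qed

lemma represents_descend:
  assumes "wqo_on A" and "quasi_incomparable_family A m Af"
    and "represents A Af a D" and "(a', a) \<in> osum_desc m (\<lambda>i. width (Af i))" and "a' \<noteq> a"
  shows "\<exists>D'\<in>Field (width A). (D', D) \<in> width A \<and> D' \<noteq> D \<and> represents A Af a' D'"
proof -
  obtain t w where t: "D = rank_class A t" "rank_witness A Af (fst a) (snd a) t"
    and w: "w \<noteq> []" "rank_witness A Af (fst a') (snd a') (t @ w)"
    using assms(3-5) rank_witness_descend[OF assms(1,2)] unfolding represents_def
    by (metis prod.collapse)
  then have "(rank_class A (t @ w), D) \<in> width A" "rank_class A (t @ w) \<noteq> D"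
    using width_append_less[OF assms(1)] rank_witness_Inco by blast+
  then show ?thesis
    using w(2) unfolding represents_def by (blast intro: FieldI1)
qed

theorem mainTheorem2:
  fixes A :: "'a::preorder set" and m :: nat and Af :: "nat \<Rightarrow> 'a set"
  assumes "wqo_on A"
    and "quasi_incomparable_family A m Af"
  shows "(osum_desc m (\<lambda>i. width (Af i)), width A) \<in> ordLeq"
proof (rule simulation_ordLeq[where R = "represents A Af"])
  have "Well_order (width (Af i))" if "i \<in> {1..m}" for i
    using Well_order_width quasi_incomparable_family_wqo_on[OF assms that] .
  then show "Well_order (osum_desc m (\<lambda>i. width (Af i)))"
    by (rule Well_order_osum_desc)
  show "Well_order (width A)"
    by (rule Well_order_width[OF assms(1)])
qed (use represents_start[OF assms] represents_descend[OF assms] in blast)+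

end
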